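(* Let $R$ be a commutative associative unital ring and $B$ a central $R$-algebra. Assume that $\beta$ is an invariant $R$-bilinear form on $B$ which is nonsingular and satisfies $\beta(B,B)=R$, and that the $R$-module $\mathbf{IBF}_R(B)$ is projective. Then $(B,\beta)$ satisfies the IBF-principle, i.e. the map $\bar\beta\colon\mathbf{IBF}_R(B)\to R$, $\overline{a\otimes b}\mapsto\beta(a,b)$, is an isomorphism of $R$-modules.
   Context: An $R$-algebra is an $R$-module with an $R$-bilinear product (no identities assumed). $\beta$ is invariant if $\beta(ab,c)=\beta(a,bc)=\beta(b,ca)$ for all $a,b,c\in B$; nonsingular if $b\mapsto\beta(b,-)$ is a bijection $B\to\mathrm{Hom}_R(B,R)$. $\beta(B,B)$ denotes the $R$-span of the values $\beta(a,b)$. The centroid is $\mathrm{Cent}_R(B)=\{\chi\in\mathrm{End}_R(B):\chi(ab)=a\chi(b)=\chi(a)b\ \forall a,b\}$, and $B$ is central if the map $R\to\mathrm{Cent}_R(B)$, $r\mapsto(b\mapsto rb)$, is an isomorphism. $\mathbf{IBF}_R(B)$ is the quotient of $B\otimes_R B$ by the $R$-submodule spanned by all $ab\otimes c-a\otimes bc$ and $ab\otimes c-b\otimes ca$, and $\overline{a\otimes b}$ denotes the class of $a\otimes b$. *)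

theory Defs
  imports "HOL-Algebra.Module" "HOL-Algebra.Ideal" "HOL-Algebra.AbelCoset"
begin

text \<open>R-algebras (no identity, no associativity): an R-module B (HOL-Algebra module record)
  whose multiplication field is an R-bilinear product.\<close>
definition R_algebra :: "'r ring \<Rightarrow> ('r, 'b) module \<Rightarrow> bool" where
  "R_algebra R B \<longleftrightarrow> module R B \<and>
     (\<forall>a\<in>carrier B. \<forall>b\<in>carrier B. a \<otimes>\<^bsub>B\<^esub> b \<in> carrier B) \<and>
     (\<forall>a\<in>carrier B. \<forall>a'\<in>carrier B. \<forall>b\<in>carrier B.
        (a \<oplus>\<^bsub>B\<^esub> a') \<otimes>\<^bsub>B\<^esub> b = (a \<otimes>\<^bsub>B\<^esub> b) \<oplus>\<^bsub>B\<^esub> (a' \<otimes>\<^bsub>B\<^esub> b) \<and>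
        b \<otimes>\<^bsub>B\<^esub> (a \<oplus>\<^bsub>B\<^esub> a') = (b \<otimes>\<^bsub>B\<^esub> a) \<oplus>\<^bsub>B\<^esub> (b \<otimes>\<^bsub>B\<^esub> a')) \<and>
     (\<forall>r\<in>carrier R. \<forall>a\<in>carrier B. \<forall>b\<in>carrier B.
        (r \<odot>\<^bsub>B\<^esub> a) \<otimes>\<^bsub>B\<^esub> b = r \<odot>\<^bsub>B\<^esub> (a \<otimes>\<^bsub>B\<^esub> b) \<and>
        a \<otimes>\<^bsub>B\<^esub> (r \<odot>\<^bsub>B\<^esub> b) = r \<odot>\<^bsub>B\<^esub> (a \<otimes>\<^bsub>B\<^esub> b))"

definition mod_hom :: "'r ring \<Rightarrow> ('r, 'm) module \<Rightarrow> ('r, 'n) module \<Rightarrow> ('m \<Rightarrow> 'n) \<Rightarrow> bool" where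
  "mod_hom R M N f \<longleftrightarrow> f \<in> carrier M \<rightarrow> carrier N \<and>
     (\<forall>x\<in>carrier M. \<forall>y\<in>carrier M. f (x \<oplus>\<^bsub>M\<^esub> y) = f x \<oplus>\<^bsub>N\<^esub> f y) \<and>
     (\<forall>r\<in>carrier R. \<forall>x\<in>carrier M. f (r \<odot>\<^bsub>M\<^esub> x) = r \<odot>\<^bsub>N\<^esub> f x)"

definition mod_iso :: "'r ring \<Rightarrow> ('r, 'm) module \<Rightarrow> ('r, 'n) module \<Rightarrow> ('m \<Rightarrow> 'n) \<Rightarrow> bool" where
  "mod_iso R M N f \<longleftrightarrow> mod_hom R M N f \<and> bij_betw f (carrier M) (carrier N)"

definition ring_mod :: "'r ring \<Rightarrow> ('r, 'r) module" where
  "ring_mod R = \<lparr>carrier = carrier R, mult = mult R, one = one R, zero = zero R,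
                 add = add R, smult = mult R\<rparr>"

definition centroid :: "'r ring \<Rightarrow> ('r, 'b) module \<Rightarrow> ('b \<Rightarrow> 'b) set" where
  "centroid R B = {\<chi>. \<chi> \<in> extensional (carrier B) \<and> mod_hom R B B \<chi> \<and>
     (\<forall>a\<in>carrier B. \<forall>b\<in>carrier B.
        \<chi> (a \<otimes>\<^bsub>B\<^esub> b) = a \<otimes>\<^bsub>B\<^esub> \<chi> b \<and> \<chi> (a \<otimes>\<^bsub>B\<^esub> b) = \<chi> a \<otimes>\<^bsub>B\<^esub> b)}"

definition central :: "'r ring \<Rightarrow> ('r, 'b) module \<Rightarrow> bool" where
  "central R B \<longleftrightarrow>
     bij_betw (\<lambda>r. \<lambda>b\<in>carrier B. r \<odot>\<^bsub>B\<^esub> b) (carrier R) (centroid R B)"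

definition bilinear_form :: "'r ring \<Rightarrow> ('r, 'b) module \<Rightarrow> ('b \<Rightarrow> 'b \<Rightarrow> 'r) \<Rightarrow> bool" where
  "bilinear_form R B \<beta> \<longleftrightarrow>
     (\<forall>a\<in>carrier B. \<forall>b\<in>carrier B. \<beta> a b \<in> carrier R) \<and>
     (\<forall>a\<in>carrier B. \<forall>a'\<in>carrier B. \<forall>b\<in>carrier B.
        \<beta> (a \<oplus>\<^bsub>B\<^esub> a') b = \<beta> a b \<oplus>\<^bsub>R\<^esub> \<beta> a' b \<and>
        \<beta> b (a \<oplus>\<^bsub>B\<^esub> a') = \<beta> b a \<oplus>\<^bsub>R\<^esub> \<beta> b a') \<and>
     (\<forall>r\<in>carrier R. \<forall>a\<in>carrier B. \<forall>b\<in>carrier B.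
        \<beta> (r \<odot>\<^bsub>B\<^esub> a) b = r \<otimes>\<^bsub>R\<^esub> \<beta> a b \<and>
        \<beta> a (r \<odot>\<^bsub>B\<^esub> b) = r \<otimes>\<^bsub>R\<^esub> \<beta> a b)"

definition invariant_form :: "('r, 'b) module \<Rightarrow> ('b \<Rightarrow> 'b \<Rightarrow> 'r) \<Rightarrow> bool" where
  "invariant_form B \<beta> \<longleftrightarrow>
     (\<forall>a\<in>carrier B. \<forall>b\<in>carrier B. \<forall>c\<in>carrier B.
        \<beta> (a \<otimes>\<^bsub>B\<^esub> b) c = \<beta> a (b \<otimes>\<^bsub>B\<^esub> c) \<and>
        \<beta> a (b \<otimes>\<^bsub>B\<^esub> c) = \<beta> b (c \<otimes>\<^bsub>B\<^esub> a))"

definition dual_mod :: "'r ring \<Rightarrow> ('r, 'b) module \<Rightarrow> ('b \<Rightarrow> 'r) set" where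
  "dual_mod R B = {\<phi>. \<phi> \<in> extensional (carrier B) \<and> mod_hom R B (ring_mod R) \<phi>}"

definition nonsingular :: "'r ring \<Rightarrow> ('r, 'b) module \<Rightarrow> ('b \<Rightarrow> 'b \<Rightarrow> 'r) \<Rightarrow> bool" where
  "nonsingular R B \<beta> \<longleftrightarrow>
     bij_betw (\<lambda>b. \<lambda>c\<in>carrier B. \<beta> b c) (carrier B) (dual_mod R B)"

definition free_mod :: "'r ring \<Rightarrow> 'a set \<Rightarrow> ('r, 'a \<Rightarrow> 'r) module" where
  "free_mod R S = \<lparr>carrier = {f. (\<forall>x. f x \<in> carrier R) \<and> (\<forall>x. x \<notin> S \<longrightarrow> f x = \<zero>\<^bsub>R\<^esub>)
                                 \<and> finite {x. f x \<noteq> \<zero>\<^bsub>R\<^esub>}},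
                   mult = (\<lambda>f g. undefined), one = undefined,
                   zero = (\<lambda>x. \<zero>\<^bsub>R\<^esub>),
                   add = (\<lambda>f g x. f x \<oplus>\<^bsub>R\<^esub> g x),
                   smult = (\<lambda>r f x. r \<otimes>\<^bsub>R\<^esub> f x)\<rparr>"

definition delta :: "'r ring \<Rightarrow> 'a \<Rightarrow> ('a \<Rightarrow> 'r)" where
  "delta R p = (\<lambda>x. if x = p then \<one>\<^bsub>R\<^esub> else \<zero>\<^bsub>R\<^esub>)"

definition gen_submod :: "'r ring \<Rightarrow> ('r, 'm) module \<Rightarrow> 'm set \<Rightarrow> 'm set" where
  "gen_submod R M S = \<Inter>{H. submodule H R M \<and> S \<subseteq> H}"

definition quot_mod :: "'r ring \<Rightarrow> ('r, 'm) module \<Rightarrow> 'm set \<Rightarrow> ('r, 'm set) module" where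
  "quot_mod R M N = \<lparr>carrier = a_rcosets\<^bsub>M\<^esub> N,
                     mult = (\<lambda>X Y. undefined), one = undefined,
                     zero = N,
                     add = (\<lambda>X Y. X <+>\<^bsub>M\<^esub> Y),
                     smult = (\<lambda>r X. N <+>\<^bsub>M\<^esub> ((\<lambda>x. r \<odot>\<^bsub>M\<^esub> x) ` X))\<rparr>"

text \<open>B \<otimes>_R B is the free module on B \<times> B modulo the bilinearity relations; IBF_R(B) is its
  quotient by the invariance relations. We quotient the free module by both at once.\<close>
definition ibf_rels :: "'r ring \<Rightarrow> ('r, 'b) module \<Rightarrow> ('b \<times> 'b \<Rightarrow> 'r) set" where
  "ibf_rels R B = (let F = free_mod R (carrier B \<times> carrier B); d = delta R in
     {d (a \<oplus>\<^bsub>B\<^esub> a', b) \<ominus>\<^bsub>F\<^esub> (d (a, b) \<oplus>\<^bsub>F\<^esub> d (a', b)) | a a' b.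
        a \<in> carrier B \<and> a' \<in> carrier B \<and> b \<in> carrier B} \<union>
     {d (a, b \<oplus>\<^bsub>B\<^esub> b') \<ominus>\<^bsub>F\<^esub> (d (a, b) \<oplus>\<^bsub>F\<^esub> d (a, b')) | a b b'.
        a \<in> carrier B \<and> b \<in> carrier B \<and> b' \<in> carrier B} \<union>
     {d (r \<odot>\<^bsub>B\<^esub> a, b) \<ominus>\<^bsub>F\<^esub> (r \<odot>\<^bsub>F\<^esub> d (a, b)) | r a b.
        r \<in> carrier R \<and> a \<in> carrier B \<and> b \<in> carrier B} \<union>
     {d (a, r \<odot>\<^bsub>B\<^esub> b) \<ominus>\<^bsub>F\<^esub> (r \<odot>\<^bsub>F\<^esub> d (a, b)) | r a b.
        r \<in> carrier R \<and> a \<in> carrier B \<and> b \<in> carrier B} \<union>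
     {d (a \<otimes>\<^bsub>B\<^esub> b, c) \<ominus>\<^bsub>F\<^esub> d (a, b \<otimes>\<^bsub>B\<^esub> c) | a b c.
        a \<in> carrier B \<and> b \<in> carrier B \<and> c \<in> carrier B} \<union>
     {d (a \<otimes>\<^bsub>B\<^esub> b, c) \<ominus>\<^bsub>F\<^esub> d (b, c \<otimes>\<^bsub>B\<^esub> a) | a b c.
        a \<in> carrier B \<and> b \<in> carrier B \<and> c \<in> carrier B})"

definition IBF :: "'r ring \<Rightarrow> ('r, 'b) module \<Rightarrow> ('r, ('b \<times> 'b \<Rightarrow> 'r) set) module" where
  "IBF R B = (let F = free_mod R (carrier B \<times> carrier B) in
                quot_mod R F (gen_submod R F (ibf_rels R B)))"

text \<open>The map \<beta>-bar: the linear extension of (a,b) \<mapsto> \<beta>(a,b) on the free module,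
  evaluated on a representative of the class.\<close>
definition beta_lin :: "'r ring \<Rightarrow> ('b \<Rightarrow> 'b \<Rightarrow> 'r) \<Rightarrow> ('b \<times> 'b \<Rightarrow> 'r) \<Rightarrow> 'r" where
  "beta_lin R \<beta> f = finsum R (\<lambda>p. f p \<otimes>\<^bsub>R\<^esub> \<beta> (fst p) (snd p)) {p. f p \<noteq> \<zero>\<^bsub>R\<^esub>}"

definition beta_bar :: "'r ring \<Rightarrow> ('b \<Rightarrow> 'b \<Rightarrow> 'r) \<Rightarrow> ('b \<times> 'b \<Rightarrow> 'r) set \<Rightarrow> 'r" where
  "beta_bar R \<beta> X = the_elem (beta_lin R \<beta> ` X)"

text \<open>Projective module: a direct summand of a free module, expressed as: the canonical
  surjection from the free module on the carrier of P onto P admits an R-linear section.\<close>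
definition projective :: "'r ring \<Rightarrow> ('r, 'm) module \<Rightarrow> bool" where
  "projective R P \<longleftrightarrow> (\<exists>s. mod_hom R P (free_mod R (carrier P)) s \<and>
     (\<forall>x\<in>carrier P. finsum P (\<lambda>p. s x p \<odot>\<^bsub>P\<^esub> p) {p. s x p \<noteq> \<zero>\<^bsub>R\<^esub>} = x))"

end

theory Submission
  imports Defs
begin

text \<open>A linear functional \<open>\<phi>\<close> on \<open>IBF\<^sub>R(B)\<close>, read on the classes of \<open>a \<otimes> b\<close>, is an
  invariant bilinear form \<open>\<gamma>\<close> on \<open>B\<close>. Nonsingularity of \<open>\<beta>\<close> gives a unique \<open>\<chi> : B \<rightarrow> B\<close> with
  \<open>\<gamma>(b, c) = \<beta>(\<chi> b, c)\<close>, and invariance of \<open>\<gamma>\<close> and \<open>\<beta>\<close> puts \<open>\<chi>\<close> in the centroid. As \<open>B\<close>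
  is central, \<open>\<chi>\<close> is multiplication by some \<open>r \<in> R\<close>, so \<open>\<phi>\<close> is \<open>r\<close> times the map
  \<open>beta_bar\<close>. Since \<open>IBF\<^sub>R(B)\<close> is projective, its linear functionals separate points, hence
  \<open>beta_bar\<close> is injective. Its image is an ideal containing every \<open>\<beta>(a, b)\<close>, hence is \<open>R\<close>.\<close>

section \<open>Free modules and linear functionals\<close>

locale scalar_ring = cring R for R :: "'r ring" (structure)
begin

lemma free_mod_carrier_iff:
  "f \<in> carrier (free_mod R A) \<longleftrightarrow>
     (\<forall>x. f x \<in> carrier R) \<and> (\<forall>x. x \<notin> A \<longrightarrow> f x = \<zero>) \<and> finite {x. f x \<noteq> \<zero>}"
  by (simp add: free_mod_def)

lemma free_mod_ops:
  "f \<oplus>\<^bsub>free_mod R A\<^esub> g = (\<lambda>x. f x \<oplus> g x)"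
  "\<zero>\<^bsub>free_mod R A\<^esub> = (\<lambda>x. \<zero>)"
  "r \<odot>\<^bsub>free_mod R A\<^esub> f = (\<lambda>x. r \<otimes> f x)"
  by (simp_all add: free_mod_def)

lemma free_mod_uminus_closed:
  assumes "f \<in> carrier (free_mod R A)"
  shows "(\<lambda>x. \<ominus> f x) \<in> carrier (free_mod R A)"
proof -
  have "{x. \<ominus> f x \<noteq> \<zero>} = {x. f x \<noteq> \<zero>}" using assms by (auto simp: free_mod_carrier_iff free_mod_ops)
  with assms show ?thesis by (auto simp: free_mod_carrier_iff free_mod_ops)
qed

lemma free_mod_abelian_group: "abelian_group (free_mod R A)"
proof (rule abelian_groupI, goal_cases)
  case (1 x y)
  then have "{z. x z \<oplus> y z \<noteq> \<zero>} \<subseteq> {z. x z \<noteq> \<zero>} \<union> {z. y z \<noteq> \<zero>}"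
    by (auto simp: free_mod_carrier_iff free_mod_ops)
  with 1 show ?case by (auto simp: free_mod_carrier_iff free_mod_ops intro: finite_subset)
next
  case (3 x y z) then show ?case by (auto simp: free_mod_carrier_iff free_mod_ops a_assoc)
next
  case (4 x y) then show ?case by (auto simp: free_mod_carrier_iff free_mod_ops a_comm)
next
  case (6 x)
  then have "(\<lambda>z. \<ominus> x z) \<oplus>\<^bsub>free_mod R A\<^esub> x = \<zero>\<^bsub>free_mod R A\<^esub>"
    by (auto simp: free_mod_carrier_iff free_mod_ops l_neg)
  with 6 show ?case using free_mod_uminus_closed by blast
qed (auto simp: free_mod_carrier_iff free_mod_ops)

lemma free_mod_module: "module R (free_mod R A)"
proof (rule moduleI[OF is_cring free_mod_abelian_group], goal_cases)
  case (1 a x)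
  then have "{z. a \<otimes> x z \<noteq> \<zero>} \<subseteq> {z. x z \<noteq> \<zero>}" by (auto simp: free_mod_carrier_iff free_mod_ops)
  with 1 show ?case by (auto simp: free_mod_carrier_iff free_mod_ops intro: finite_subset)
qed (auto simp: free_mod_carrier_iff free_mod_ops l_distr r_distr m_assoc)

lemma free_mod_support: "f \<in> carrier (free_mod R A) \<Longrightarrow> f p \<noteq> \<zero> \<Longrightarrow> p \<in> A"
  by (auto simp: free_mod_carrier_iff)

lemma delta_in_free_mod: "p \<in> A \<Longrightarrow> delta R p \<in> carrier (free_mod R A)"
  by (auto simp: free_mod_carrier_iff free_mod_ops delta_def intro: finite_subset[of _ "{p}"])

lemma ring_mod_simps [simp]:
  "carrier (ring_mod R) = carrier R" "x \<oplus>\<^bsub>ring_mod R\<^esub> y = x \<oplus> y"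
  "r \<odot>\<^bsub>ring_mod R\<^esub> x = r \<otimes> x" "\<zero>\<^bsub>ring_mod R\<^esub> = \<zero>"
  by (simp_all add: ring_mod_def)

lemma mod_hom_closed: "mod_hom R M N f \<Longrightarrow> x \<in> carrier M \<Longrightarrow> f x \<in> carrier N"
  and mod_hom_add: "mod_hom R M N f \<Longrightarrow> x \<in> carrier M \<Longrightarrow> y \<in> carrier M \<Longrightarrow>
    f (x \<oplus>\<^bsub>M\<^esub> y) = f x \<oplus>\<^bsub>N\<^esub> f y"
  and mod_hom_smult: "mod_hom R M N f \<Longrightarrow> r \<in> carrier R \<Longrightarrow> x \<in> carrier M \<Longrightarrow>
    f (r \<odot>\<^bsub>M\<^esub> x) = r \<odot>\<^bsub>N\<^esub> f x"
  unfolding mod_hom_def by auto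

lemma mod_hom_zero:
  assumes "module R M" and h: "mod_hom R M (ring_mod R) \<psi>"
  shows "\<psi> \<zero>\<^bsub>M\<^esub> = \<zero>"
proof -
  interpret M: module R M by fact
  have "\<psi> \<zero>\<^bsub>M\<^esub> = \<psi> (\<zero> \<odot>\<^bsub>M\<^esub> \<zero>\<^bsub>M\<^esub>)" by simp
  also have "\<dots> = \<zero>"
    using mod_hom_smult[OF h, of \<zero> "\<zero>\<^bsub>M\<^esub>"] mod_hom_closed[OF h, of "\<zero>\<^bsub>M\<^esub>"] by simp
  finally show ?thesis .
qed

lemma mod_hom_a_inv:
  assumes M: "module R M" and h: "mod_hom R M (ring_mod R) \<psi>" and x: "x \<in> carrier M"
  shows "\<psi> (\<ominus>\<^bsub>M\<^esub> x) = \<ominus> \<psi> x"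
proof -
  interpret M: module R M by fact
  have "\<psi> (\<ominus>\<^bsub>M\<^esub> x) \<oplus> \<psi> x = \<psi> (\<ominus>\<^bsub>M\<^esub> x \<oplus>\<^bsub>M\<^esub> x)"
    using mod_hom_add[OF h] x by simp
  also have "\<dots> = \<zero>" using mod_hom_zero[OF M h] x by (simp add: M.l_neg)
  finally show ?thesis
    using minus_equality mod_hom_closed[OF h] x by simp
qed

lemma mod_hom_a_minus:
  assumes M: "module R M" and h: "mod_hom R M (ring_mod R) \<psi>"
    and "x \<in> carrier M" "y \<in> carrier M"
  shows "\<psi> (x \<ominus>\<^bsub>M\<^esub> y) = \<psi> x \<ominus> \<psi> y"
proof -
  interpret M: module R M by fact
  show ?thesis
    using assms mod_hom_add[OF h] mod_hom_a_inv[OF M h] by (simp add: a_minus_def)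
qed

lemma mod_hom_scale:
  assumes h: "mod_hom R M (ring_mod R) \<psi>" and r: "r \<in> carrier R"
  shows "mod_hom R M (ring_mod R) (\<lambda>x. r \<otimes> \<psi> x)"
  unfolding mod_hom_def
proof (intro conjI ballI funcsetI)
  show "r \<otimes> \<psi> x \<in> carrier (ring_mod R)" if "x \<in> carrier M" for x
    using r mod_hom_closed[OF h that] by simp
  show "r \<otimes> \<psi> (x \<oplus>\<^bsub>M\<^esub> y) = r \<otimes> \<psi> x \<oplus>\<^bsub>ring_mod R\<^esub> r \<otimes> \<psi> y"
    if "x \<in> carrier M" "y \<in> carrier M" for x y
    using r mod_hom_closed[OF h] that by (simp add: mod_hom_add[OF h] r_distr)
  show "r \<otimes> \<psi> (s \<odot>\<^bsub>M\<^esub> x) = s \<odot>\<^bsub>ring_mod R\<^esub> (r \<otimes> \<psi> x)"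
    if "s \<in> carrier R" "x \<in> carrier M" for s x
    using r mod_hom_closed[OF h] that by (simp add: mod_hom_smult[OF h] m_lcomm)
qed

lemma mod_hom_image_ideal:
  assumes M: "module R M" and h: "mod_hom R M (ring_mod R) \<psi>"
  shows "ideal (\<psi> ` carrier M) R"
proof -
  interpret M: module R M by fact
  show ?thesis
  proof (rule idealI[OF ring_axioms])
    show "subgroup (\<psi> ` carrier M) (add_monoid R)"
    proof
      show "\<psi> ` carrier M \<subseteq> carrier (add_monoid R)" using mod_hom_closed[OF h] by auto
      show "\<one>\<^bsub>add_monoid R\<^esub> \<in> \<psi> ` carrier M"
        using mod_hom_zero[OF M h] M.zero_closed by (metis image_eqI monoid.simps(2))
      show "x \<otimes>\<^bsub>add_monoid R\<^esub> y \<in> \<psi> ` carrier M"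
        if "x \<in> \<psi> ` carrier M" "y \<in> \<psi> ` carrier M" for x y
      proof -
        from that obtain a b where "a \<in> carrier M" "b \<in> carrier M" "x = \<psi> a" "y = \<psi> b" by blast
        then show ?thesis using mod_hom_add[OF h] by (auto intro!: image_eqI[where x = "a \<oplus>\<^bsub>M\<^esub> b"])
      qed
      show "inv\<^bsub>add_monoid R\<^esub> x \<in> \<psi> ` carrier M" if "x \<in> \<psi> ` carrier M" for x
        using that mod_hom_a_inv[OF M h] unfolding a_inv_def[symmetric]
        by (auto intro!: image_eqI[OF _ M.a_inv_closed])
    qed
    show "x \<otimes> a \<in> \<psi> ` carrier M" if "a \<in> \<psi> ` carrier M" "x \<in> carrier R" for a x
      using that mod_hom_smult[OF h] by (auto intro!: image_eqI[OF _ M.smult_closed])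
    then show "a \<otimes> x \<in> \<psi> ` carrier M" if "a \<in> \<psi> ` carrier M" "x \<in> carrier R" for a x
      using that mod_hom_closed[OF h] m_comm by auto
  qed
qed

lemma free_mod_functional_eqI:
  assumes h1: "mod_hom R (free_mod R A) (ring_mod R) \<psi>1"
    and h2: "mod_hom R (free_mod R A) (ring_mod R) \<psi>2"
    and basis: "\<And>p. p \<in> A \<Longrightarrow> \<psi>1 (delta R p) = \<psi>2 (delta R p)"
    and f: "f \<in> carrier (free_mod R A)"
  shows "\<psi>1 f = \<psi>2 f"
proof -
  interpret M: module R "free_mod R A" by (rule free_mod_module)
  have "\<psi>1 g = \<psi>2 g" if "finite D" "g \<in> carrier (free_mod R A)" "{x. g x \<noteq> \<zero>} \<subseteq> D" for D g
    using that
  proof (induction D arbitrary: g rule: finite_induct)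
    case empty
    then have "g = \<zero>\<^bsub>free_mod R A\<^esub>" by (auto simp: free_mod_ops)
    then show ?case using mod_hom_zero[OF M.module_axioms h1] mod_hom_zero[OF M.module_axioms h2] by simp
  next
    case (insert p D)
    define g0 where "g0 = g(p := \<zero>)"
    have g0: "g0 \<in> carrier (free_mod R A)"
      using insert.prems(1) by (auto simp: free_mod_carrier_iff free_mod_ops g0_def intro: finite_subset[of _ "{x. g x \<noteq> \<zero>}"])
    have "{x. g0 x \<noteq> \<zero>} \<subseteq> D" using insert.prems(2) by (auto simp: g0_def)
    note IH = insert.IH[OF g0 this]
    show ?case
    proof (cases "p \<in> A")
      case False
      then have "g = g0" using insert.prems(1) by (auto simp: free_mod_carrier_iff free_mod_ops g0_def)
      then show ?thesis using IH by simp
    next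
      case True
      have gp: "g p \<in> carrier R" using insert.prems(1) by (simp add: free_mod_carrier_iff free_mod_ops)
      have d: "delta R p \<in> carrier (free_mod R A)" using True by (rule delta_in_free_mod)
      have g: "g = g0 \<oplus>\<^bsub>free_mod R A\<^esub> (g p \<odot>\<^bsub>free_mod R A\<^esub> delta R p)"
        using insert.prems(1) by (auto simp: g0_def delta_def free_mod_carrier_iff free_mod_ops)
      have s: "g p \<odot>\<^bsub>free_mod R A\<^esub> delta R p \<in> carrier (free_mod R A)"
        using M.smult_closed[OF gp d] .
      have "\<psi>1 g = \<psi>1 g0 \<oplus> g p \<otimes> \<psi>1 (delta R p)"
        by (subst g) (simp only: mod_hom_add[OF h1 g0 s] mod_hom_smult[OF h1 gp d] ring_mod_simps)
      also have "\<dots> = \<psi>2 g0 \<oplus> g p \<otimes> \<psi>2 (delta R p)" using IH basis[OF True] by simp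
      also have "\<dots> = \<psi>2 g"
        by (subst (2) g) (simp only: mod_hom_add[OF h2 g0 s] mod_hom_smult[OF h2 gp d] ring_mod_simps)
      finally show ?thesis .
    qed
  qed
  with f show ?thesis by (auto simp: free_mod_carrier_iff free_mod_ops)
qed

end

lemma (in abelian_group) minus_eq_zero_iff:
  "x \<in> carrier G \<Longrightarrow> y \<in> carrier G \<Longrightarrow> x \<ominus> y = \<zero> \<longleftrightarrow> x = y"
  by (simp add: add.inv_solve_right' minus_eq)

lemma (in scalar_ring) mod_hom_kernel_submodule:
  assumes M: "module R M" and h: "mod_hom R M (ring_mod R) \<psi>"
  shows "submodule {x \<in> carrier M. \<psi> x = \<zero>} R M"
proof -
  interpret M: module R M by fact
  show ?thesis
    by (rule M.submoduleI)
      (auto simp: mod_hom_zero[OF M h] mod_hom_a_inv[OF M h] mod_hom_add[OF h] mod_hom_smult[OF h])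
qed

lemma (in scalar_ring) mod_hom_inj_onI:
  assumes M: "module R M" and h: "mod_hom R M (ring_mod R) \<psi>"
    and kernel: "\<And>x. x \<in> carrier M \<Longrightarrow> \<psi> x = \<zero> \<Longrightarrow> x = \<zero>\<^bsub>M\<^esub>"
  shows "inj_on \<psi> (carrier M)"
proof (rule inj_onI)
  interpret M: module R M by fact
  fix x y assume xy: "x \<in> carrier M" "y \<in> carrier M" "\<psi> x = \<psi> y"
  then have "\<psi> (x \<ominus>\<^bsub>M\<^esub> y) = \<zero>"
    using mod_hom_a_minus[OF M h] mod_hom_closed[OF h] by (simp add: minus_eq_zero_iff)
  then show "x = y" using kernel[OF M.minus_closed[OF xy(1,2)]] M.minus_eq_zero_iff xy(1,2) by simp
qed

section \<open>Generated submodules, quotient modules, projective modules\<close>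

lemma gen_submod_least: "submodule H R M \<Longrightarrow> S \<subseteq> H \<Longrightarrow> gen_submod R M S \<subseteq> H"
  unfolding gen_submod_def by blast

lemma gen_submod_incl: "S \<subseteq> gen_submod R M S"
  unfolding gen_submod_def by blast

lemma (in module) submodule_zero_closed: "submodule H R M \<Longrightarrow> \<zero>\<^bsub>M\<^esub> \<in> H"
  using subgroup.one_closed[OF submodule.axioms(1)] by force

lemma (in scalar_ring) gen_submod_submodule:
  assumes "module R M" and "S \<subseteq> carrier M"
  shows "submodule (gen_submod R M S) R M"
proof -
  interpret M: module R M by fact
  let ?H = "{H. submodule H R M \<and> S \<subseteq> H}"
  show ?thesis
    unfolding gen_submod_def
  proof (rule M.submoduleI)
    have "carrier M \<in> ?H" using M.carrier_is_submodule assms(2) by blast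
    then show "\<Inter>?H \<subseteq> carrier M" by blast
    show "\<zero>\<^bsub>M\<^esub> \<in> \<Inter>?H"
      using M.submodule_zero_closed by blast
    show "\<ominus>\<^bsub>M\<^esub> a \<in> \<Inter>?H" if "a \<in> \<Inter>?H" for a
      using that M.submoduleE(3) by blast
    show "a \<oplus>\<^bsub>M\<^esub> b \<in> \<Inter>?H" if "a \<in> \<Inter>?H" "b \<in> \<Inter>?H" for a b
      using that M.submoduleE(5) by blast
    show "r \<odot>\<^bsub>M\<^esub> a \<in> \<Inter>?H" if "r \<in> carrier R" "a \<in> \<Inter>?H" for r a
      using that M.submoduleE(4) by blast
  qed
qed

lemma (in scalar_ring) projective_eq_zeroI:
  assumes P: "module R P" and "projective R P" and x: "x \<in> carrier P"
    and vanish: "\<And>\<phi>. mod_hom R P (ring_mod R) \<phi> \<Longrightarrow> \<phi> x = \<zero>"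
  shows "x = \<zero>\<^bsub>P\<^esub>"
proof -
  interpret P: module R P by fact
  obtain s where s: "mod_hom R P (free_mod R (carrier P)) s"
    and expand: "\<And>y. y \<in> carrier P \<Longrightarrow> (\<Oplus>\<^bsub>P\<^esub>p\<in>{p. s y p \<noteq> \<zero>}. s y p \<odot>\<^bsub>P\<^esub> p) = y"
    using \<open>projective R P\<close> unfolding projective_def by blast
  have "mod_hom R P (ring_mod R) (\<lambda>y. s y p)" for p
    using s unfolding mod_hom_def by (auto simp: free_mod_carrier_iff free_mod_ops Pi_iff)
  then have "{p. s x p \<noteq> \<zero>} = {}" using vanish by blast
  then show ?thesis using expand[OF x] by simp
qed

locale quotient_module = module R M for R :: "'r ring" (structure) and M :: "('r, 'm) module" +
  fixes N :: "'m set"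
  assumes submodule: "submodule N R M"
begin

abbreviation (input) Q where "Q \<equiv> quot_mod R M N"

lemma abelian_subgroup: "abelian_subgroup N M"
  by (rule abelian_subgroupI3[OF additive_subgroup.intro[OF submodule.axioms(1)[OF submodule]]])
     (rule abelian_group_axioms)

lemma quot_mod_simps:
  "\<zero>\<^bsub>Q\<^esub> = N" "X \<oplus>\<^bsub>Q\<^esub> Y = X <+>\<^bsub>M\<^esub> Y" "r \<odot>\<^bsub>Q\<^esub> X = N <+>\<^bsub>M\<^esub> ((\<lambda>x. r \<odot>\<^bsub>M\<^esub> x) ` X)"
  by (simp_all add: quot_mod_def)

lemma quot_mod_carrier_iff: "X \<in> carrier Q \<longleftrightarrow> (\<exists>f\<in>carrier M. X = N +>\<^bsub>M\<^esub> f)"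
  by (auto simp: quot_mod_def A_RCOSETS_def RCOSETS_def a_r_coset_def)

lemma coset_in_quot_mod: "f \<in> carrier M \<Longrightarrow> N +>\<^bsub>M\<^esub> f \<in> carrier Q"
  using quot_mod_carrier_iff by blast

lemma quot_mod_cases:
  assumes "X \<in> carrier Q" obtains f where "f \<in> carrier M" "X = N +>\<^bsub>M\<^esub> f"
  using assms quot_mod_carrier_iff by blast

lemma coset_add:
  "f \<in> carrier M \<Longrightarrow> g \<in> carrier M \<Longrightarrow> (N +>\<^bsub>M\<^esub> f) \<oplus>\<^bsub>Q\<^esub> (N +>\<^bsub>M\<^esub> g) = N +>\<^bsub>M\<^esub> (f \<oplus>\<^bsub>M\<^esub> g)"
  using abelian_subgroup.a_rcos_sum[OF abelian_subgroup] by (simp add: quot_mod_simps)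

lemma coset_smult:
  assumes r: "r \<in> carrier R" and f: "f \<in> carrier M"
  shows "r \<odot>\<^bsub>Q\<^esub> (N +>\<^bsub>M\<^esub> f) = N +>\<^bsub>M\<^esub> (r \<odot>\<^bsub>M\<^esub> f)"
proof -
  interpret N: abelian_subgroup N M by (rule abelian_subgroup)
  have "N <+>\<^bsub>M\<^esub> ((\<lambda>x. r \<odot>\<^bsub>M\<^esub> x) ` (N +>\<^bsub>M\<^esub> f)) = N +>\<^bsub>M\<^esub> (r \<odot>\<^bsub>M\<^esub> f)"
  proof (intro equalityI subsetI)
    fix z assume "z \<in> N <+>\<^bsub>M\<^esub> ((\<lambda>x. r \<odot>\<^bsub>M\<^esub> x) ` (N +>\<^bsub>M\<^esub> f))"
    then obtain n m where nm: "n \<in> N" "m \<in> N" "z = n \<oplus>\<^bsub>M\<^esub> r \<odot>\<^bsub>M\<^esub> (m \<oplus>\<^bsub>M\<^esub> f)"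
      unfolding set_add_def' a_r_coset_def' by blast
    have nmc: "n \<in> carrier M" "m \<in> carrier M" using nm submoduleE(1)[OF submodule] by auto
    have "z = (n \<oplus>\<^bsub>M\<^esub> r \<odot>\<^bsub>M\<^esub> m) \<oplus>\<^bsub>M\<^esub> r \<odot>\<^bsub>M\<^esub> f"
      using nm(3) nmc r f by (simp add: smult_r_distr a_assoc)
    moreover have "n \<oplus>\<^bsub>M\<^esub> r \<odot>\<^bsub>M\<^esub> m \<in> N"
      using nm r submoduleE(4,5)[OF submodule] by blast
    ultimately show "z \<in> N +>\<^bsub>M\<^esub> (r \<odot>\<^bsub>M\<^esub> f)" unfolding a_r_coset_def' by blast
  next
    fix z assume "z \<in> N +>\<^bsub>M\<^esub> (r \<odot>\<^bsub>M\<^esub> f)"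
    then obtain n where "n \<in> N" "z = n \<oplus>\<^bsub>M\<^esub> r \<odot>\<^bsub>M\<^esub> f" unfolding a_r_coset_def' by blast
    moreover have "r \<odot>\<^bsub>M\<^esub> f \<in> (\<lambda>x. r \<odot>\<^bsub>M\<^esub> x) ` (N +>\<^bsub>M\<^esub> f)" using N.a_rcos_self[OF f] by blast
    ultimately show "z \<in> N <+>\<^bsub>M\<^esub> ((\<lambda>x. r \<odot>\<^bsub>M\<^esub> x) ` (N +>\<^bsub>M\<^esub> f))"
      unfolding set_add_def' by blast
  qed
  then show ?thesis by (simp add: quot_mod_simps)
qed

lemma coset_eq_zero_iff: "f \<in> carrier M \<Longrightarrow> N +>\<^bsub>M\<^esub> f = \<zero>\<^bsub>Q\<^esub> \<longleftrightarrow> f \<in> N"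
  using abelian_subgroup.a_rcos_const[OF abelian_subgroup] abelian_subgroup.a_rcos_self[OF abelian_subgroup]
  by (auto simp: quot_mod_simps)

lemma quot_mod_module: "module R Q"
proof -
  interpret N: abelian_subgroup N M by (rule abelian_subgroup)
  have zero: "\<zero>\<^bsub>Q\<^esub> = N +>\<^bsub>M\<^esub> \<zero>\<^bsub>M\<^esub>"
    using coset_eq_zero_iff[OF zero_closed] submodule_zero_closed[OF submodule] by simp
  have "abelian_group Q"
  proof (rule abelian_groupI, goal_cases)
    case (1 X Y) then show ?case
      by (auto elim!: quot_mod_cases simp: coset_add coset_in_quot_mod)
  next
    case 2 then show ?case by (simp add: zero coset_in_quot_mod)
  next
    case (3 X Y Z) then show ?case
      by (auto elim!: quot_mod_cases simp: coset_add a_assoc)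
  next
    case (4 X Y) then show ?case
      by (auto elim!: quot_mod_cases simp: coset_add a_comm)
  next
    case (5 X) then show ?case
      by (elim quot_mod_cases) (simp add: zero coset_add)
  next
    case (6 X)
    then obtain f where f: "f \<in> carrier M" "X = N +>\<^bsub>M\<^esub> f" by (rule quot_mod_cases)
    then have "(N +>\<^bsub>M\<^esub> \<ominus>\<^bsub>M\<^esub> f) \<oplus>\<^bsub>Q\<^esub> X = \<zero>\<^bsub>Q\<^esub>"
      by (simp only: coset_add a_inv_closed l_neg zero)
    with f show ?case by (blast intro: coset_in_quot_mod)
  qed
  then show ?thesis
  proof (rule moduleI[OF is_cring], goal_cases)
    case (1 r X) then show ?case
      by (auto elim!: quot_mod_cases simp: coset_smult coset_in_quot_mod)
  next
    case (2 r s X) then show ?case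
      by (auto elim!: quot_mod_cases simp: coset_smult coset_add smult_l_distr)
  next
    case (3 r X Y) then show ?case
      by (auto elim!: quot_mod_cases simp: coset_smult coset_add smult_r_distr)
  next
    case (4 r s X) then show ?case
      by (auto elim!: quot_mod_cases simp: coset_smult smult_assoc1)
  next
    case (5 X) then show ?case
      by (auto elim!: quot_mod_cases simp: coset_smult)
  qed
qed

end

section \<open>Invariant forms on central algebras\<close>

lemma R_algebra_module: "R_algebra R B \<Longrightarrow> module R B"
  and R_algebra_mult_closed: "R_algebra R B \<Longrightarrow> a \<in> carrier B \<Longrightarrow> b \<in> carrier B \<Longrightarrow> a \<otimes>\<^bsub>B\<^esub> b \<in> carrier B"
  unfolding R_algebra_def by blast+

lemma bilinear_form_closed: "bilinear_form R B \<gamma> \<Longrightarrow> a \<in> carrier B \<Longrightarrow> b \<in> carrier B \<Longrightarrow> \<gamma> a b \<in> carrier R"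
  and bilinear_form_add_left: "bilinear_form R B \<gamma> \<Longrightarrow> a \<in> carrier B \<Longrightarrow> a' \<in> carrier B \<Longrightarrow> b \<in> carrier B \<Longrightarrow>
    \<gamma> (a \<oplus>\<^bsub>B\<^esub> a') b = \<gamma> a b \<oplus>\<^bsub>R\<^esub> \<gamma> a' b"
  and bilinear_form_add_right: "bilinear_form R B \<gamma> \<Longrightarrow> a \<in> carrier B \<Longrightarrow> b \<in> carrier B \<Longrightarrow> b' \<in> carrier B \<Longrightarrow>
    \<gamma> a (b \<oplus>\<^bsub>B\<^esub> b') = \<gamma> a b \<oplus>\<^bsub>R\<^esub> \<gamma> a b'"
  and bilinear_form_smult_left: "bilinear_form R B \<gamma> \<Longrightarrow> r \<in> carrier R \<Longrightarrow> a \<in> carrier B \<Longrightarrow> b \<in> carrier B \<Longrightarrow>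
    \<gamma> (r \<odot>\<^bsub>B\<^esub> a) b = r \<otimes>\<^bsub>R\<^esub> \<gamma> a b"
  and bilinear_form_smult_right: "bilinear_form R B \<gamma> \<Longrightarrow> r \<in> carrier R \<Longrightarrow> a \<in> carrier B \<Longrightarrow> b \<in> carrier B \<Longrightarrow>
    \<gamma> a (r \<odot>\<^bsub>B\<^esub> b) = r \<otimes>\<^bsub>R\<^esub> \<gamma> a b"
  unfolding bilinear_form_def by blast+

lemma invariant_form_assoc: "invariant_form B \<gamma> \<Longrightarrow> a \<in> carrier B \<Longrightarrow> b \<in> carrier B \<Longrightarrow> c \<in> carrier B \<Longrightarrow>
    \<gamma> (a \<otimes>\<^bsub>B\<^esub> b) c = \<gamma> a (b \<otimes>\<^bsub>B\<^esub> c)"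
  and invariant_form_cyclic: "invariant_form B \<gamma> \<Longrightarrow> a \<in> carrier B \<Longrightarrow> b \<in> carrier B \<Longrightarrow> c \<in> carrier B \<Longrightarrow>
    \<gamma> (a \<otimes>\<^bsub>B\<^esub> b) c = \<gamma> b (c \<otimes>\<^bsub>B\<^esub> a)"
  unfolding invariant_form_def by metis+

locale invariant_form_algebra = scalar_ring R for R :: "'r ring" (structure) +
  fixes B :: "('r, 'b) module" and \<beta> :: "'b \<Rightarrow> 'b \<Rightarrow> 'r"
  assumes algebra: "R_algebra R B" and bilinear: "bilinear_form R B \<beta>" and invariant: "invariant_form B \<beta>"
begin

lemma B_closed:
  "a \<in> carrier B \<Longrightarrow> b \<in> carrier B \<Longrightarrow> a \<oplus>\<^bsub>B\<^esub> b \<in> carrier B"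
  "a \<in> carrier B \<Longrightarrow> b \<in> carrier B \<Longrightarrow> a \<otimes>\<^bsub>B\<^esub> b \<in> carrier B"
  "r \<in> carrier R \<Longrightarrow> a \<in> carrier B \<Longrightarrow> r \<odot>\<^bsub>B\<^esub> a \<in> carrier B"
  using R_algebra_mult_closed[OF algebra] module.smult_closed[OF R_algebra_module[OF algebra]]
    abelian_monoid.a_closed[OF abelian_group.axioms(1)[OF module.axioms(2)[OF R_algebra_module[OF algebra]]]]
  by auto

lemma nonsingular_eqI:
  assumes "nonsingular R B \<beta>" and "y \<in> carrier B" "z \<in> carrier B"
    and "\<And>c. c \<in> carrier B \<Longrightarrow> \<beta> y c = \<beta> z c"
  shows "y = z"
proof -
  have "(\<lambda>c\<in>carrier B. \<beta> y c) = (\<lambda>c\<in>carrier B. \<beta> z c)" using assms(4) by auto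
  with assms(1-3) show ?thesis unfolding nonsingular_def bij_betw_def inj_on_def by blast
qed

text \<open>Nonsingularity lets every form be written as \<open>\<gamma> b c = \<beta> (\<chi> b) c\<close>;
  \<open>beta_adjoint \<gamma>\<close> is this map \<open>\<chi>\<close>.\<close>
definition beta_adjoint :: "('b \<Rightarrow> 'b \<Rightarrow> 'r) \<Rightarrow> 'b \<Rightarrow> 'b" where
  "beta_adjoint \<gamma> = (\<lambda>b\<in>carrier B. THE y. y \<in> carrier B \<and> (\<forall>c\<in>carrier B. \<beta> y c = \<gamma> b c))"

context
  fixes \<gamma> assumes nonsingular: "nonsingular R B \<beta>" and bilinear_\<gamma>: "bilinear_form R B \<gamma>"
begin

lemma beta_adjoint:
  assumes b: "b \<in> carrier B"
  shows "beta_adjoint \<gamma> b \<in> carrier B" "\<And>c. c \<in> carrier B \<Longrightarrow> \<beta> (beta_adjoint \<gamma> b) c = \<gamma> b c"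
proof -
  have "(\<lambda>c\<in>carrier B. \<gamma> b c) \<in> dual_mod R B"
    unfolding dual_mod_def mod_hom_def
  proof (intro CollectI conjI ballI funcsetI)
    show "(\<lambda>c\<in>carrier B. \<gamma> b c) x \<in> carrier (ring_mod R)" if "x \<in> carrier B" for x
      using b that by (simp add: bilinear_form_closed[OF bilinear_\<gamma>])
    show "(\<lambda>c\<in>carrier B. \<gamma> b c) (x \<oplus>\<^bsub>B\<^esub> y) =
        (\<lambda>c\<in>carrier B. \<gamma> b c) x \<oplus>\<^bsub>ring_mod R\<^esub> (\<lambda>c\<in>carrier B. \<gamma> b c) y"
      if "x \<in> carrier B" "y \<in> carrier B" for x y
      using b that by (simp add: B_closed bilinear_form_add_right[OF bilinear_\<gamma>])
    show "(\<lambda>c\<in>carrier B. \<gamma> b c) (r \<odot>\<^bsub>B\<^esub> x) = r \<odot>\<^bsub>ring_mod R\<^esub> (\<lambda>c\<in>carrier B. \<gamma> b c) x"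
      if "r \<in> carrier R" "x \<in> carrier B" for r x
      using b that by (simp add: B_closed bilinear_form_smult_right[OF bilinear_\<gamma>])
  qed simp
  then obtain y where y: "y \<in> carrier B" "(\<lambda>c\<in>carrier B. \<gamma> b c) = (\<lambda>c\<in>carrier B. \<beta> y c)"
    using nonsingular unfolding nonsingular_def bij_betw_def by (auto elim!: equalityE)
  have y_rep: "\<beta> y c = \<gamma> b c" if "c \<in> carrier B" for c
    using fun_cong[OF y(2), of c] that by simp
  have "\<exists>!y. y \<in> carrier B \<and> (\<forall>c\<in>carrier B. \<beta> y c = \<gamma> b c)"
  proof (rule ex1I[of _ y])
    fix z assume "z \<in> carrier B \<and> (\<forall>c\<in>carrier B. \<beta> z c = \<gamma> b c)"
    then show "z = y" using nonsingular_eqI[OF nonsingular _ y(1)] y_rep by simp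
  qed (use y(1) y_rep in blast)
  then have "beta_adjoint \<gamma> b \<in> carrier B \<and> (\<forall>c\<in>carrier B. \<beta> (beta_adjoint \<gamma> b) c = \<gamma> b c)"
    unfolding beta_adjoint_def restrict_apply' [OF b] by (rule theI')
  then show "beta_adjoint \<gamma> b \<in> carrier B" "\<And>c. c \<in> carrier B \<Longrightarrow> \<beta> (beta_adjoint \<gamma> b) c = \<gamma> b c"
    by auto
qed

lemma beta_adjoint_eqI:
  assumes "b \<in> carrier B" "y \<in> carrier B" "\<And>c. c \<in> carrier B \<Longrightarrow> \<beta> y c = \<gamma> b c"
  shows "beta_adjoint \<gamma> b = y"
  using nonsingular_eqI[OF nonsingular beta_adjoint(1)[OF assms(1)] assms(2)] beta_adjoint(2)[OF assms(1)] assms(3)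
  by simp

lemma beta_adjoint_centroid:
  assumes invariant_\<gamma>: "invariant_form B \<gamma>"
  shows "beta_adjoint \<gamma> \<in> centroid R B"
  unfolding centroid_def mem_Collect_eq
proof (intro conjI ballI)
  show "beta_adjoint \<gamma> \<in> extensional (carrier B)" by (simp add: beta_adjoint_def)
  show "mod_hom R B B (beta_adjoint \<gamma>)"
    unfolding mod_hom_def
  proof (intro conjI ballI funcsetI)
    show "beta_adjoint \<gamma> x \<in> carrier B" if "x \<in> carrier B" for x
      using beta_adjoint(1)[OF that] .
    show "beta_adjoint \<gamma> (x \<oplus>\<^bsub>B\<^esub> y) = beta_adjoint \<gamma> x \<oplus>\<^bsub>B\<^esub> beta_adjoint \<gamma> y"
      if "x \<in> carrier B" "y \<in> carrier B" for x y
      using that by (intro beta_adjoint_eqI)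
        (simp_all add: B_closed beta_adjoint bilinear_form_add_left[OF bilinear] bilinear_form_add_left[OF bilinear_\<gamma>])
    show "beta_adjoint \<gamma> (r \<odot>\<^bsub>B\<^esub> x) = r \<odot>\<^bsub>B\<^esub> beta_adjoint \<gamma> x"
      if "r \<in> carrier R" "x \<in> carrier B" for r x
      using that by (intro beta_adjoint_eqI)
        (simp_all add: B_closed beta_adjoint bilinear_form_smult_left[OF bilinear] bilinear_form_smult_left[OF bilinear_\<gamma>])
  qed
  fix a b assume ab: "a \<in> carrier B" "b \<in> carrier B"
  show "beta_adjoint \<gamma> (a \<otimes>\<^bsub>B\<^esub> b) = a \<otimes>\<^bsub>B\<^esub> beta_adjoint \<gamma> b"
  proof (rule beta_adjoint_eqI)
    fix c assume c: "c \<in> carrier B"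
    have "\<beta> (a \<otimes>\<^bsub>B\<^esub> beta_adjoint \<gamma> b) c = \<beta> (beta_adjoint \<gamma> b) (c \<otimes>\<^bsub>B\<^esub> a)"
      using ab c by (simp add: invariant_form_cyclic[OF invariant] beta_adjoint)
    also have "\<dots> = \<gamma> (a \<otimes>\<^bsub>B\<^esub> b) c"
      using ab c by (simp add: invariant_form_cyclic[OF invariant_\<gamma>] beta_adjoint B_closed)
    finally show "\<beta> (a \<otimes>\<^bsub>B\<^esub> beta_adjoint \<gamma> b) c = \<gamma> (a \<otimes>\<^bsub>B\<^esub> b) c" .
  qed (use ab in \<open>auto simp: B_closed beta_adjoint\<close>)
  show "beta_adjoint \<gamma> (a \<otimes>\<^bsub>B\<^esub> b) = beta_adjoint \<gamma> a \<otimes>\<^bsub>B\<^esub> b"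
  proof (rule beta_adjoint_eqI)
    fix c assume c: "c \<in> carrier B"
    have "\<beta> (beta_adjoint \<gamma> a \<otimes>\<^bsub>B\<^esub> b) c = \<beta> (beta_adjoint \<gamma> a) (b \<otimes>\<^bsub>B\<^esub> c)"
      using ab c by (simp add: invariant_form_assoc[OF invariant] beta_adjoint)
    also have "\<dots> = \<gamma> (a \<otimes>\<^bsub>B\<^esub> b) c"
      using ab c by (simp add: invariant_form_assoc[OF invariant_\<gamma>] beta_adjoint B_closed)
    finally show "\<beta> (beta_adjoint \<gamma> a \<otimes>\<^bsub>B\<^esub> b) c = \<gamma> (a \<otimes>\<^bsub>B\<^esub> b) c" .
  qed (use ab in \<open>auto simp: B_closed beta_adjoint\<close>)
qed

lemma invariant_form_proportional:
  assumes "central R B" and "invariant_form B \<gamma>"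
  obtains r where "r \<in> carrier R" "\<And>a b. a \<in> carrier B \<Longrightarrow> b \<in> carrier B \<Longrightarrow> \<gamma> a b = r \<otimes> \<beta> a b"
proof -
  obtain r where r: "r \<in> carrier R" "beta_adjoint \<gamma> = (\<lambda>b\<in>carrier B. r \<odot>\<^bsub>B\<^esub> b)"
    using beta_adjoint_centroid[OF assms(2)] assms(1) unfolding central_def bij_betw_def by blast
  have "\<gamma> a b = r \<otimes> \<beta> a b" if "a \<in> carrier B" "b \<in> carrier B" for a b
    using that beta_adjoint(2)[of a b] r by (simp add: bilinear_form_smult_left[OF bilinear])
  with r(1) show thesis by (rule that)
qed

end

section \<open>The module \<open>IBF\<close>\<close>

abbreviation "F \<equiv> free_mod R (carrier B \<times> carrier B)"
abbreviation "N \<equiv> gen_submod R F (ibf_rels R B)"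

lemma delta_in_F: "a \<in> carrier B \<Longrightarrow> b \<in> carrier B \<Longrightarrow> delta R (a, b) \<in> carrier F"
  by (simp add: delta_in_free_mod)

lemma ibf_rels_carrier: "ibf_rels R B \<subseteq> carrier F"
proof -
  interpret F: module R F by (rule free_mod_module)
  show ?thesis
    unfolding ibf_rels_def Let_def by (auto simp: delta_in_F B_closed)
qed

lemma N_submodule: "submodule N R F"
  by (rule gen_submod_submodule[OF free_mod_module ibf_rels_carrier])

lemma functional_kills_ibf_rels_iff:
  assumes \<psi>: "mod_hom R F (ring_mod R) \<psi>"
  shows "(\<forall>x\<in>ibf_rels R B. \<psi> x = \<zero>) \<longleftrightarrow>
    bilinear_form R B (\<lambda>a b. \<psi> (delta R (a, b))) \<and> invariant_form B (\<lambda>a b. \<psi> (delta R (a, b)))"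
proof -
  interpret F: module R F by (rule free_mod_module)
  have kills: "\<psi> (f \<ominus>\<^bsub>F\<^esub> g) = \<zero> \<longleftrightarrow> \<psi> f = \<psi> g" if "f \<in> carrier F" "g \<in> carrier F" for f g
    using that mod_hom_a_minus[OF F.module_axioms \<psi>] mod_hom_closed[OF \<psi>] by (simp add: minus_eq_zero_iff)
  let ?d = "delta R"
  have "(\<forall>x\<in>ibf_rels R B. \<psi> x = \<zero>) \<longleftrightarrow>
    (\<forall>a\<in>carrier B. \<forall>a'\<in>carrier B. \<forall>b\<in>carrier B.
       \<psi> (?d (a \<oplus>\<^bsub>B\<^esub> a', b) \<ominus>\<^bsub>F\<^esub> (?d (a, b) \<oplus>\<^bsub>F\<^esub> ?d (a', b))) = \<zero> \<and>
       \<psi> (?d (b, a \<oplus>\<^bsub>B\<^esub> a') \<ominus>\<^bsub>F\<^esub> (?d (b, a) \<oplus>\<^bsub>F\<^esub> ?d (b, a'))) = \<zero>) \<and>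
    (\<forall>r\<in>carrier R. \<forall>a\<in>carrier B. \<forall>b\<in>carrier B.
       \<psi> (?d (r \<odot>\<^bsub>B\<^esub> a, b) \<ominus>\<^bsub>F\<^esub> r \<odot>\<^bsub>F\<^esub> ?d (a, b)) = \<zero> \<and>
       \<psi> (?d (a, r \<odot>\<^bsub>B\<^esub> b) \<ominus>\<^bsub>F\<^esub> r \<odot>\<^bsub>F\<^esub> ?d (a, b)) = \<zero>) \<and>
    (\<forall>a\<in>carrier B. \<forall>b\<in>carrier B. \<forall>c\<in>carrier B.
       \<psi> (?d (a \<otimes>\<^bsub>B\<^esub> b, c) \<ominus>\<^bsub>F\<^esub> ?d (a, b \<otimes>\<^bsub>B\<^esub> c)) = \<zero> \<and>
       \<psi> (?d (a \<otimes>\<^bsub>B\<^esub> b, c) \<ominus>\<^bsub>F\<^esub> ?d (b, c \<otimes>\<^bsub>B\<^esub> a)) = \<zero>)"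
    unfolding ibf_rels_def Let_def by blast
  also have "\<dots> \<longleftrightarrow>
    (\<forall>a\<in>carrier B. \<forall>a'\<in>carrier B. \<forall>b\<in>carrier B.
       \<psi> (?d (a \<oplus>\<^bsub>B\<^esub> a', b)) = \<psi> (?d (a, b)) \<oplus> \<psi> (?d (a', b)) \<and>
       \<psi> (?d (b, a \<oplus>\<^bsub>B\<^esub> a')) = \<psi> (?d (b, a)) \<oplus> \<psi> (?d (b, a'))) \<and>
    (\<forall>r\<in>carrier R. \<forall>a\<in>carrier B. \<forall>b\<in>carrier B.
       \<psi> (?d (r \<odot>\<^bsub>B\<^esub> a, b)) = r \<otimes> \<psi> (?d (a, b)) \<and>
       \<psi> (?d (a, r \<odot>\<^bsub>B\<^esub> b)) = r \<otimes> \<psi> (?d (a, b))) \<and>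
    (\<forall>a\<in>carrier B. \<forall>b\<in>carrier B. \<forall>c\<in>carrier B.
       \<psi> (?d (a \<otimes>\<^bsub>B\<^esub> b, c)) = \<psi> (?d (a, b \<otimes>\<^bsub>B\<^esub> c)) \<and>
       \<psi> (?d (a \<otimes>\<^bsub>B\<^esub> b, c)) = \<psi> (?d (b, c \<otimes>\<^bsub>B\<^esub> a)))"
    by (simp add: kills delta_in_F B_closed F.a_closed F.smult_closed
        mod_hom_add[OF \<psi>] mod_hom_smult[OF \<psi>])
  also have "\<dots> \<longleftrightarrow> bilinear_form R B (\<lambda>a b. \<psi> (?d (a, b))) \<and> invariant_form B (\<lambda>a b. \<psi> (?d (a, b)))"
    unfolding bilinear_form_def invariant_form_def using mod_hom_closed[OF \<psi> delta_in_F]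
    by (auto; metis)
  finally show ?thesis .
qed

lemma beta_lin_closed:
  assumes f: "f \<in> carrier F"
  shows "beta_lin R \<beta> f \<in> carrier R"
  unfolding beta_lin_def
proof (rule add.finprod_closed, rule funcsetI)
  fix p assume "p \<in> {p. f p \<noteq> \<zero>}"
  then have "p \<in> carrier B \<times> carrier B" using free_mod_support[OF f] by blast
  with f show "f p \<otimes> \<beta> (fst p) (snd p) \<in> carrier R"
    by (auto simp: free_mod_carrier_iff bilinear_form_closed[OF bilinear])
qed

lemma beta_lin_eq_sum:
  assumes f: "f \<in> carrier F" and D: "finite D" "{p. f p \<noteq> \<zero>} \<subseteq> D" "D \<subseteq> carrier B \<times> carrier B"
  shows "beta_lin R \<beta> f = (\<Oplus>p\<in>D. f p \<otimes> \<beta> (fst p) (snd p))"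
  unfolding beta_lin_def
proof (rule add.finprod_mono_neutral_cong_left[OF D(1,2)])
  show "f p \<otimes> \<beta> (fst p) (snd p) = \<zero>" if "p \<in> D - {p. f p \<noteq> \<zero>}" for p
    using that D(3) by (auto simp: bilinear_form_closed[OF bilinear])
  show "(\<lambda>p. f p \<otimes> \<beta> (fst p) (snd p)) \<in> D \<rightarrow> carrier R"
    using D(3) f by (auto simp: free_mod_carrier_iff bilinear_form_closed[OF bilinear])
qed simp

lemma beta_lin_hom: "mod_hom R F (ring_mod R) (beta_lin R \<beta>)"
  unfolding mod_hom_def
proof (intro conjI ballI funcsetI)
  let ?t = "\<lambda>f p. f p \<otimes> \<beta> (fst p) (snd p)"
  have t_closed: "?t f \<in> D \<rightarrow> carrier R" if "f \<in> carrier F" "D \<subseteq> carrier B \<times> carrier B" for f D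
    using that by (auto simp: free_mod_carrier_iff bilinear_form_closed[OF bilinear])
  show "beta_lin R \<beta> f \<in> carrier (ring_mod R)" if "f \<in> carrier F" for f
    using beta_lin_closed[OF that] by simp
  fix f assume f: "f \<in> carrier F"
  fix g assume g: "g \<in> carrier F"
  let ?D = "{p. f p \<noteq> \<zero>} \<union> {p. g p \<noteq> \<zero>}"
  have D: "finite ?D" "?D \<subseteq> carrier B \<times> carrier B" using f g by (auto simp: free_mod_carrier_iff)
  have fg: "f \<oplus>\<^bsub>F\<^esub> g \<in> carrier F" using abelian_monoid.a_closed[OF abelian_group.axioms(1)[OF free_mod_abelian_group] f g] .
  have "beta_lin R \<beta> (f \<oplus>\<^bsub>F\<^esub> g) = (\<Oplus>p\<in>?D. ?t f p \<oplus> ?t g p)"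
    using f g D by (subst beta_lin_eq_sum[OF fg D(1) _ D(2)])
      (auto simp: free_mod_ops free_mod_carrier_iff l_distr bilinear_form_closed[OF bilinear] intro!: add.finprod_cong')
  also have "\<dots> = (\<Oplus>p\<in>?D. ?t f p) \<oplus> (\<Oplus>p\<in>?D. ?t g p)"
    by (rule finsum_addf[OF t_closed[OF f D(2)] t_closed[OF g D(2)]])
  also have "\<dots> = beta_lin R \<beta> f \<oplus> beta_lin R \<beta> g"
    using beta_lin_eq_sum[OF f D(1) _ D(2)] beta_lin_eq_sum[OF g D(1) _ D(2)] by auto
  finally show "beta_lin R \<beta> (f \<oplus>\<^bsub>F\<^esub> g) = beta_lin R \<beta> f \<oplus>\<^bsub>ring_mod R\<^esub> beta_lin R \<beta> g" by simp
next
  fix r f assume r: "r \<in> carrier R" and f: "f \<in> carrier F"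
  let ?D = "{p. f p \<noteq> \<zero>}"
  have D: "finite ?D" "?D \<subseteq> carrier B \<times> carrier B" using f by (auto simp: free_mod_carrier_iff)
  have rf: "r \<odot>\<^bsub>F\<^esub> f \<in> carrier F" using module.smult_closed[OF free_mod_module r f] .
  have "beta_lin R \<beta> (r \<odot>\<^bsub>F\<^esub> f) = (\<Oplus>p\<in>?D. r \<otimes> (f p \<otimes> \<beta> (fst p) (snd p)))"
    using f r D by (subst beta_lin_eq_sum[OF rf D(1) _ D(2)])
      (auto simp: free_mod_ops free_mod_carrier_iff m_assoc bilinear_form_closed[OF bilinear] intro!: add.finprod_cong')
  also have "\<dots> = r \<otimes> beta_lin R \<beta> f"
    unfolding beta_lin_def using f r D
    by (intro finsum_rdistr[symmetric]) (auto simp: free_mod_carrier_iff bilinear_form_closed[OF bilinear])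
  finally show "beta_lin R \<beta> (r \<odot>\<^bsub>F\<^esub> f) = r \<odot>\<^bsub>ring_mod R\<^esub> beta_lin R \<beta> f" by simp
qed

lemma beta_lin_delta:
  assumes "a \<in> carrier B" "b \<in> carrier B"
  shows "beta_lin R \<beta> (delta R (a, b)) = \<beta> a b"
proof -
  have "{p. delta R (a, b) p \<noteq> \<zero>} \<subseteq> {(a, b)}" by (auto simp: delta_def)
  then have "beta_lin R \<beta> (delta R (a, b)) = (\<Oplus>p\<in>{(a, b)}. delta R (a, b) p \<otimes> \<beta> (fst p) (snd p))"
    using assms by (intro beta_lin_eq_sum[OF delta_in_F[OF assms]]) auto
  also have "\<dots> = \<beta> a b" using assms by (simp add: delta_def bilinear_form_closed[OF bilinear])
  finally show ?thesis .
qed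

lemma N_subset_beta_lin_kernel: "N \<subseteq> {f \<in> carrier F. beta_lin R \<beta> f = \<zero>}"
proof (rule gen_submod_least[OF mod_hom_kernel_submodule[OF free_mod_module beta_lin_hom]])
  have "bilinear_form R B (\<lambda>a b. beta_lin R \<beta> (delta R (a, b))) \<and>
      invariant_form B (\<lambda>a b. beta_lin R \<beta> (delta R (a, b)))"
    using bilinear invariant unfolding bilinear_form_def invariant_form_def
    by (auto simp: beta_lin_delta B_closed)
  then have "\<forall>x\<in>ibf_rels R B. beta_lin R \<beta> x = \<zero>"
    using functional_kills_ibf_rels_iff[OF beta_lin_hom] by blast
  then show "ibf_rels R B \<subseteq> {f \<in> carrier F. beta_lin R \<beta> f = \<zero>}"
    using ibf_rels_carrier by blast
qed

end

sublocale invariant_form_algebra \<subseteq> IBF: quotient_module R "free_mod R (carrier B \<times> carrier B)"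
    "gen_submod R (free_mod R (carrier B \<times> carrier B)) (ibf_rels R B)"
  by (intro quotient_module.intro free_mod_module quotient_module_axioms.intro N_submodule)

context invariant_form_algebra
begin

lemma IBF_eq: "IBF R B = quot_mod R F N"
  by (simp add: IBF_def Let_def)

lemma IBF_module: "module R (IBF R B)"
  unfolding IBF_eq by (rule IBF.quot_mod_module)

lemma IBF_coset_closed: "f \<in> carrier F \<Longrightarrow> N +>\<^bsub>F\<^esub> f \<in> carrier (IBF R B)"
  and IBF_coset_add: "f \<in> carrier F \<Longrightarrow> g \<in> carrier F \<Longrightarrow>
    (N +>\<^bsub>F\<^esub> f) \<oplus>\<^bsub>IBF R B\<^esub> (N +>\<^bsub>F\<^esub> g) = N +>\<^bsub>F\<^esub> (f \<oplus>\<^bsub>F\<^esub> g)"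
  and IBF_coset_smult: "r \<in> carrier R \<Longrightarrow> f \<in> carrier F \<Longrightarrow>
    r \<odot>\<^bsub>IBF R B\<^esub> (N +>\<^bsub>F\<^esub> f) = N +>\<^bsub>F\<^esub> (r \<odot>\<^bsub>F\<^esub> f)"
  and IBF_coset_eq_zero_iff: "f \<in> carrier F \<Longrightarrow> N +>\<^bsub>F\<^esub> f = \<zero>\<^bsub>IBF R B\<^esub> \<longleftrightarrow> f \<in> N"
  and IBF_cases: "X \<in> carrier (IBF R B) \<Longrightarrow> (\<And>f. f \<in> carrier F \<Longrightarrow> X = N +>\<^bsub>F\<^esub> f \<Longrightarrow> P) \<Longrightarrow> P"
  unfolding IBF_eq
  by (fact IBF.coset_in_quot_mod IBF.coset_add IBF.coset_smult IBF.coset_eq_zero_iff IBF.quot_mod_cases)+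

lemma beta_bar_coset:
  assumes f: "f \<in> carrier F"
  shows "beta_bar R \<beta> (N +>\<^bsub>F\<^esub> f) = beta_lin R \<beta> f"
proof -
  have "beta_lin R \<beta> ` (N +>\<^bsub>F\<^esub> f) = {beta_lin R \<beta> f}"
  proof (intro equalityI subsetI)
    fix y assume "y \<in> beta_lin R \<beta> ` (N +>\<^bsub>F\<^esub> f)"
    then obtain n where n: "n \<in> N" "y = beta_lin R \<beta> (n \<oplus>\<^bsub>F\<^esub> f)"
      unfolding a_r_coset_def' by blast
    then show "y \<in> {beta_lin R \<beta> f}"
      using N_subset_beta_lin_kernel f mod_hom_add[OF beta_lin_hom] beta_lin_closed by auto
  qed (use abelian_subgroup.a_rcos_self[OF IBF.abelian_subgroup f] in blast)
  then show ?thesis unfolding beta_bar_def by simp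
qed

lemma beta_bar_hom: "mod_hom R (IBF R B) (ring_mod R) (beta_bar R \<beta>)"
  unfolding mod_hom_def IBF_eq
  by (auto elim!: IBF.quot_mod_cases simp: IBF.coset_add IBF.coset_smult beta_bar_coset beta_lin_closed
      mod_hom_add[OF beta_lin_hom] mod_hom_smult[OF beta_lin_hom] module.smult_closed[OF free_mod_module]
      abelian_monoid.a_closed[OF abelian_group.axioms(1)[OF free_mod_abelian_group]])

lemma IBF_functional_proportional:
  assumes nonsingular: "nonsingular R B \<beta>" and central: "central R B"
    and \<phi>: "mod_hom R (IBF R B) (ring_mod R) \<phi>"
  obtains r where "r \<in> carrier R" "\<And>X. X \<in> carrier (IBF R B) \<Longrightarrow> \<phi> X = r \<otimes> beta_bar R \<beta> X"
proof -
  let ?\<psi> = "\<lambda>f. \<phi> (N +>\<^bsub>F\<^esub> f)"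
  have \<psi>: "mod_hom R F (ring_mod R) ?\<psi>"
    unfolding mod_hom_def
  proof (intro conjI ballI funcsetI)
    show "?\<psi> f \<in> carrier (ring_mod R)" if "f \<in> carrier F" for f
      using mod_hom_closed[OF \<phi> IBF_coset_closed[OF that]] .
    show "?\<psi> (f \<oplus>\<^bsub>F\<^esub> g) = ?\<psi> f \<oplus>\<^bsub>ring_mod R\<^esub> ?\<psi> g" if "f \<in> carrier F" "g \<in> carrier F" for f g
      using mod_hom_add[OF \<phi> IBF_coset_closed[OF that(1)] IBF_coset_closed[OF that(2)]]
      by (simp add: IBF_coset_add[OF that])
    show "?\<psi> (r \<odot>\<^bsub>F\<^esub> f) = r \<odot>\<^bsub>ring_mod R\<^esub> ?\<psi> f" if "r \<in> carrier R" "f \<in> carrier F" for r f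
      using mod_hom_smult[OF \<phi> that(1) IBF_coset_closed[OF that(2)]]
      by (simp add: IBF_coset_smult[OF that])
  qed
  have "?\<psi> x = \<zero>" if "x \<in> ibf_rels R B" for x
  proof -
    have x: "x \<in> carrier F" using ibf_rels_carrier that by (rule subsetD)
    have "x \<in> N" using gen_submod_incl that by (rule subsetD)
    then have "N +>\<^bsub>F\<^esub> x = \<zero>\<^bsub>IBF R B\<^esub>" by (rule iffD2[OF IBF_coset_eq_zero_iff[OF x]])
    then show ?thesis using mod_hom_zero[OF IBF_module \<phi>] by (simp only:)
  qed
  then have "bilinear_form R B (\<lambda>a b. ?\<psi> (delta R (a, b)))" "invariant_form B (\<lambda>a b. ?\<psi> (delta R (a, b)))"
    using functional_kills_ibf_rels_iff[OF \<psi>] by blast+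
  from invariant_form_proportional[OF nonsingular this(1) central this(2)]
  obtain r where r: "r \<in> carrier R"
    and \<gamma>: "\<And>a b. a \<in> carrier B \<Longrightarrow> b \<in> carrier B \<Longrightarrow> ?\<psi> (delta R (a, b)) = r \<otimes> \<beta> a b"
    by blast
  have "?\<psi> f = r \<otimes> beta_lin R \<beta> f" if "f \<in> carrier F" for f
  proof (rule free_mod_functional_eqI[OF \<psi> mod_hom_scale[OF beta_lin_hom r] _ that])
    fix p assume "p \<in> carrier B \<times> carrier B"
    then show "?\<psi> (delta R p) = r \<otimes> beta_lin R \<beta> (delta R p)"
      using \<gamma> beta_lin_delta by auto
  qed
  then have "\<phi> X = r \<otimes> beta_bar R \<beta> X" if "X \<in> carrier (IBF R B)" for X
    using that by (auto elim: IBF_cases simp: beta_bar_coset)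
  with r show thesis by (rule that)
qed

lemma beta_bar_inj_on:
  assumes "nonsingular R B \<beta>" "central R B" "projective R (IBF R B)"
  shows "inj_on (beta_bar R \<beta>) (carrier (IBF R B))"
proof (rule mod_hom_inj_onI[OF IBF_module beta_bar_hom])
  fix X assume X: "X \<in> carrier (IBF R B)" "beta_bar R \<beta> X = \<zero>"
  show "X = \<zero>\<^bsub>IBF R B\<^esub>"
  proof (rule projective_eq_zeroI[OF IBF_module assms(3) X(1)])
    fix \<phi> assume "mod_hom R (IBF R B) (ring_mod R) \<phi>"
    then obtain r where "r \<in> carrier R" "\<phi> X = r \<otimes> beta_bar R \<beta> X"
      using IBF_functional_proportional[OF assms(1,2)] X(1) by metis
    then show "\<phi> X = \<zero>" using X(2) by simp
  qed
qed

lemma beta_bar_image: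
  assumes "Idl ((\<lambda>(a, b). \<beta> a b) ` (carrier B \<times> carrier B)) = carrier R"
  shows "beta_bar R \<beta> ` carrier (IBF R B) = carrier R"
proof
  show "beta_bar R \<beta> ` carrier (IBF R B) \<subseteq> carrier R"
    using mod_hom_closed[OF beta_bar_hom] by auto
  have gens: "(\<lambda>(a, b). \<beta> a b) ` (carrier B \<times> carrier B) \<subseteq> beta_bar R \<beta> ` carrier (IBF R B)"
  proof clarify
    fix a b assume ab: "a \<in> carrier B" "b \<in> carrier B"
    have "\<beta> a b = beta_bar R \<beta> (N +>\<^bsub>F\<^esub> delta R (a, b))"
      using ab by (simp add: beta_bar_coset delta_in_F beta_lin_delta)
    moreover have "N +>\<^bsub>F\<^esub> delta R (a, b) \<in> carrier (IBF R B)"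
      using ab by (simp add: IBF_coset_closed delta_in_F)
    ultimately show "\<beta> a b \<in> beta_bar R \<beta> ` carrier (IBF R B)" by blast
  qed
  show "carrier R \<subseteq> beta_bar R \<beta> ` carrier (IBF R B)"
    using genideal_minimal[OF mod_hom_image_ideal[OF IBF_module beta_bar_hom] gens] assms by simp
qed

end

theorem proposition3p9:
  fixes R :: "'r ring" and B :: "('r, 'b) module" and \<beta> :: "'b \<Rightarrow> 'b \<Rightarrow> 'r"
  assumes "cring R"
    and "R_algebra R B"
    and "central R B"
    and "bilinear_form R B \<beta>"
    and "invariant_form B \<beta>"
    and "nonsingular R B \<beta>"
    and "Idl\<^bsub>R\<^esub> ((\<lambda>(a, b). \<beta> a b) ` (carrier B \<times> carrier B)) = carrier R"
    and "projective R (IBF R B)"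
  shows "mod_iso R (IBF R B) (ring_mod R) (beta_bar R \<beta>)"
proof -
  interpret invariant_form_algebra R B \<beta>
    using assms(1,2,4,5) by (simp add: invariant_form_algebra_def invariant_form_algebra_axioms_def scalar_ring_def)
  show ?thesis
    unfolding mod_iso_def bij_betw_def
    using beta_bar_hom beta_bar_inj_on[OF assms(6,3,8)] beta_bar_image[OF assms(7)] by simp
qed

end
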